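(* In the setting below, if $\eta \geq \eta_0$, then $|\tilde{w}_t| \leq \eta$ for all integers $0 \le t < \tau$.
   Context: Dimension $d=2$. Data $x_1,\dots,x_n\in\mathbb{R}^2$ with $\|x_i\|\le 1$, linearly separable (some $w$ has $\langle w,x_i\rangle>0$ for all $i$). $F(w) = \frac{1}{n}\sum_{i=1}^n \log(1+\exp(-\langle w, x_i\rangle))$. Maximum margin $\gamma = \max_{\|w\|=1}\min_i \langle w, x_i\rangle$ with maximizer the unit vector $w_*$; $v_*$ is a fixed unit vector orthogonal to $w_*$. Gradient descent: $w_0=0$, $w_{t+1} = w_t - \eta\nabla F(w_t)$ with constant $\eta>0$. $\tilde{w}_t = \langle w_t, v_*\rangle$. $\tau = \min\{t\ge 0: F(w_t)\le 1/(8\eta)\}$. $\eta_0 = \max(n, \frac{32}{\gamma^2}\log\frac{256}{\gamma^2})$. *)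

theory Defs
  imports "HOL-Analysis.Analysis"
begin

definition logistic_risk :: "nat \<Rightarrow> (nat \<Rightarrow> real^2) \<Rightarrow> real^2 \<Rightarrow> real" where
  "logistic_risk n x w = (1 / real n) * (\<Sum>i<n. ln (1 + exp (- (w \<bullet> x i))))"

definition logistic_grad :: "nat \<Rightarrow> (nat \<Rightarrow> real^2) \<Rightarrow> real^2 \<Rightarrow> real^2" where
  "logistic_grad n x w = - ((1 / real n) *\<^sub>R (\<Sum>i<n. (1 / (1 + exp (w \<bullet> x i))) *\<^sub>R x i))"

fun gd_iter :: "nat \<Rightarrow> (nat \<Rightarrow> real^2) \<Rightarrow> real \<Rightarrow> nat \<Rightarrow> real^2" where
  "gd_iter n x \<eta> 0 = 0"
| "gd_iter n x \<eta> (Suc t) = gd_iter n x \<eta> t - \<eta> *\<^sub>R logistic_grad n x (gd_iter n x \<eta> t)"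

definition max_margin :: "nat \<Rightarrow> (nat \<Rightarrow> real^2) \<Rightarrow> real" where
  "max_margin n x = (SUP w \<in> {w. norm w = 1}. (MIN i \<in> {..<n}. w \<bullet> x i))"

end

(*
  Write w_t = a_t w_* + b_t v_*.  A gradient step changes b_t by at most \<eta>, never decreases
  a_t, and already the first step gives a_t \<ge> \<eta> \<gamma> / 2; hence from t = 1 on every point
  has margin part a_t <w_*, x_i> \<ge> u = \<eta> \<gamma>^2 / 2.  Now let 0 \<le> b_t \<le> \<eta>.  Points with
  <v_*, x_i> > 0 then have margin \<ge> u and push b_t up by at most e^(-u) each.  On the other
  hand F(w_t) > 1/(8 \<eta>) forces logistic weight at least n/(32 \<eta>) onto the points of margin
  \<le> ln (16 \<eta>), and each of these has <v_*, x_i> \<le> -(u - ln (16 \<eta>)) / \<eta>.  For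
  \<eta> \<ge> \<eta>_0 the second effect dominates, so b_(t+1) \<le> b_t; symmetrically for b_t \<le> 0.
  Hence b_t never leaves [-\<eta>, \<eta>].
*)
theory Submission
  imports Defs
begin

definition logistic_loss :: "real \<Rightarrow> real" where
  "logistic_loss z = ln (1 + exp (- z))"

(* The negative derivative of logistic_loss: logistic_grad n x w is minus the mean of
   logistic_weight (w \<bullet> x i) *\<^sub>R x i. *)
definition logistic_weight :: "real \<Rightarrow> real" where
  "logistic_weight z = 1 / (1 + exp z)"

lemma logistic_weight_pos: "0 < logistic_weight z"
  unfolding logistic_weight_def by (simp add: add_pos_pos)

lemma logistic_weight_le_one: "logistic_weight z \<le> 1"
  unfolding logistic_weight_def by (simp add: add_pos_pos)

lemma logistic_weight_le_exp: "logistic_weight z \<le> exp (- z)"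
  unfolding logistic_weight_def exp_minus inverse_eq_divide by (intro frac_le) auto

lemma logistic_weight_gt_half:
  assumes "z < 0"
  shows "1 / 2 < logistic_weight z"
  unfolding logistic_weight_def using assms by (intro frac_less2) (auto simp: add_pos_pos)

lemma logistic_loss_le_exp: "logistic_loss z \<le> exp (- z)"
  unfolding logistic_loss_def by (intro ln_add_one_self_le_self) simp

lemma logistic_loss_le_twice_weight:
  assumes "0 \<le> z"
  shows "logistic_loss z \<le> 2 * logistic_weight z"
proof -
  have "exp (- z) \<le> 2 / (1 + exp z)"
    using assms by (simp add: exp_minus field_simps add_pos_pos)
  then show ?thesis
    using logistic_loss_le_exp[of z] unfolding logistic_weight_def by simp
qed

lemma ln_le_quarter:
  fixes u :: real
  assumes "16 \<le> u"
  shows "ln u \<le> u / 4"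
proof -
  have "ln (8::real) = 3 * ln 2"
    using ln_realpow[of 2 3] by simp
  moreover have "ln u = ln (u / 8) + ln 8"
    using assms by (simp add: ln_div)
  moreover have "ln (u / 8) \<le> u / 8 - 1"
    using assms by (intro ln_le_minus_one) simp
  ultimately show ?thesis
    using ln_2_less_1 assms by linarith
qed

lemma large_step_size_bounds:
  fixes \<gamma> \<eta> :: real
  assumes \<gamma>_pos: "0 < \<gamma>" and \<gamma>_le_1: "\<gamma> \<le> 1"
    and \<eta>_large: "32 / \<gamma>\<^sup>2 * ln (256 / \<gamma>\<^sup>2) \<le> \<eta>"
  defines "u \<equiv> \<eta> * \<gamma>\<^sup>2 / 2"
  shows "ln (16 * \<eta>) \<le> u / 2" and "32 * \<eta>\<^sup>2 * exp (- u) \<le> u / 2"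
proof -
  define L where "L = ln (256 / \<gamma>\<^sup>2)"
  have \<gamma>2: "0 < \<gamma>\<^sup>2" "\<gamma>\<^sup>2 \<le> 1"
    using \<gamma>_pos \<gamma>_le_1 by (auto simp: power_le_one)
  have "ln 3 \<le> L"
    unfolding L_def using \<gamma>2 by (subst ln_le_cancel_iff) (auto simp: field_simps)
  then have L_ge_1: "1 \<le> L"
    using ln3_gt_1 by linarith
  have u_ge_L: "16 * L \<le> u"
    using \<eta>_large \<gamma>2 unfolding u_def L_def by (simp add: field_simps)
  then have u_ge_16: "16 \<le> u"
    using L_ge_1 by linarith
  have \<eta>_eq: "\<eta> = 2 * u / \<gamma>\<^sup>2"
    unfolding u_def using \<gamma>2 by simp
  have "ln (16 * \<eta>) = ln (256 / \<gamma>\<^sup>2 * (u / 8))"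
    unfolding \<eta>_eq by simp
  also have "\<dots> = L + ln (u / 8)"
    unfolding L_def using \<gamma>2 u_ge_16 by (intro ln_mult_pos) auto
  also have "\<dots> \<le> L + (u / 8 - 1)"
    using u_ge_16 by (simp add: ln_le_minus_one)
  finally show "ln (16 * \<eta>) \<le> u / 2"
    using u_ge_L u_ge_16 by linarith
  define q where "q = 256 / \<gamma>\<^sup>2 * u * (1 / \<gamma>\<^sup>2)"
  have q_pos: "0 < q"
    unfolding q_def using \<gamma>2 u_ge_16 by simp
  have "ln q = L + ln u + ln (1 / \<gamma>\<^sup>2)"
    unfolding q_def L_def using \<gamma>2 u_ge_16 by (subst ln_mult_pos; (subst ln_mult_pos)?; simp)
  also have "\<dots> \<le> L + ln u + L"
    unfolding L_def using \<gamma>2 by (simp add: frac_le)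
  also have "\<dots> \<le> u"
    using ln_le_quarter[OF u_ge_16] u_ge_L u_ge_16 by linarith
  finally have "q \<le> exp u"
    using q_pos by (metis exp_le_cancel_iff exp_ln)
  have "32 * \<eta>\<^sup>2 * exp (- u) = u / 2 * (q / exp u)"
    unfolding \<eta>_eq q_def using \<gamma>2 by (simp add: exp_minus field_simps power2_eq_square)
  also have "\<dots> \<le> u / 2"
    using \<open>q \<le> exp u\<close> u_ge_16 by (intro mult_left_le) auto
  finally show "32 * \<eta>\<^sup>2 * exp (- u) \<le> u / 2" .
qed

lemma inner_expand_orthonormal_pair:
  fixes e f w y :: "real^2"
  assumes "norm e = 1" "norm f = 1" "e \<bullet> f = 0"
  shows "w \<bullet> y = (w \<bullet> e) * (e \<bullet> y) + (w \<bullet> f) * (f \<bullet> y)"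
proof -
  have "e$1 * e$1 + e$2 * e$2 = 1" "f$1 * f$1 + f$2 * f$2 = 1" "e$1 * f$1 + e$2 * f$2 = 0"
    using assms by (simp_all add: norm_eq_1 inner_vec_def sum_2)
  then show ?thesis
    unfolding inner_vec_def sum_2 inner_real_def by algebra
qed

lemma logistic_weight_sum_low_margin_ge:
  fixes z :: "nat \<Rightarrow> real"
  assumes \<eta>_pos: "0 < \<eta>" and n_le_\<eta>: "real n \<le> \<eta>"
    and risk: "real n / (8 * \<eta>) < (\<Sum>i<n. logistic_loss (z i))"
  shows "real n / (32 * \<eta>) \<le> (\<Sum>i | i < n \<and> z i \<le> ln (16 * \<eta>). logistic_weight (z i))"
proof -
  define S where "S = {i. i < n \<and> z i \<le> ln (16 * \<eta>)}"
  have S_eq: "S = {i \<in> {..<n}. z i \<le> ln (16 * \<eta>)}"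
    unfolding S_def by auto
  have "finite S"
    unfolding S_def by simp
  have loss_split: "logistic_loss (z i) \<le> (if i \<in> S then logistic_loss (z i) else 0) + 1 / (16 * \<eta>)"
    if "i < n" for i
  proof (cases "i \<in> S")
    case False
    then have "- z i \<le> - ln (16 * \<eta>)"
      using that unfolding S_def by simp
    then have "exp (- z i) \<le> exp (- ln (16 * \<eta>))"
      by simp
    also have "\<dots> = 1 / (16 * \<eta>)"
      using \<eta>_pos by (simp add: exp_minus inverse_eq_divide)
    finally show ?thesis
      using False logistic_loss_le_exp[of "z i"] by simp
  qed (use \<eta>_pos in simp)
  have "(\<Sum>i<n. logistic_loss (z i))
      \<le> (\<Sum>i<n. (if i \<in> S then logistic_loss (z i) else 0) + 1 / (16 * \<eta>))"
    using loss_split by (intro sum_mono) simp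
  also have "\<dots> = (\<Sum>i\<in>S. logistic_loss (z i)) + real n / (16 * \<eta>)"
    by (simp only: S_eq sum.inter_filter[OF finite_lessThan] sum.distrib) simp
  finally have "(\<Sum>i<n. logistic_loss (z i)) \<le> (\<Sum>i\<in>S. logistic_loss (z i)) + real n / (16 * \<eta>)" .
  with risk have loss_S: "real n / (16 * \<eta>) < (\<Sum>i\<in>S. logistic_loss (z i))"
    by simp
  show ?thesis
  proof (cases "\<exists>i\<in>S. z i < 0")
    case True
    then obtain i where i: "i \<in> S" "z i < 0"
      by blast
    have "real n / (32 * \<eta>) \<le> 1 / 2"
      using n_le_\<eta> \<eta>_pos by (simp add: divide_simps)
    also have "\<dots> \<le> logistic_weight (z i)"
      using logistic_weight_gt_half[OF i(2)] by simp
    also have "\<dots> \<le> (\<Sum>i\<in>S. logistic_weight (z i))"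
      using \<open>finite S\<close> i(1) by (intro member_le_sum) (auto intro: less_imp_le logistic_weight_pos)
    finally show ?thesis
      unfolding S_def .
  next
    case False
    then have "(\<Sum>i\<in>S. logistic_loss (z i)) \<le> (\<Sum>i\<in>S. 2 * logistic_weight (z i))"
      by (intro sum_mono logistic_loss_le_twice_weight) (simp add: not_less)
    with loss_S show ?thesis
      unfolding S_def by (simp add: sum_distrib_left[symmetric])
  qed
qed

lemma logistic_weight_mult_le:
  assumes z: "z = c + b * \<beta>" and "u \<le> c" and "\<bar>\<beta>\<bar> \<le> 1"
    and "0 \<le> b" and "b \<le> \<eta>" and "0 < \<eta>" and "Z < u"
  shows "logistic_weight z * \<beta> \<le> exp (- u) - (if z \<le> Z then logistic_weight z * (u - Z) / \<eta> else 0)"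
proof (cases "0 < \<beta>")
  case True
  then have "0 \<le> b * \<beta>"
    using assms by simp
  then have "u \<le> z"
    using assms unfolding z by linarith
  have "logistic_weight z * \<beta> \<le> logistic_weight z"
    using assms logistic_weight_pos[of z] by (intro mult_left_le) auto
  also have "\<dots> \<le> exp (- z)"
    by (rule logistic_weight_le_exp)
  also have "\<dots> \<le> exp (- u)"
    using \<open>u \<le> z\<close> by simp
  finally show ?thesis
    using \<open>u \<le> z\<close> \<open>Z < u\<close> by simp
next
  case False
  have weight_pos: "0 < logistic_weight z"
    by (rule logistic_weight_pos)
  show ?thesis
  proof (cases "z \<le> Z")
    case True
    then have "u - Z \<le> b * (- \<beta>)"
      using assms by (simp add: z)
    also have "\<dots> \<le> \<eta> * (- \<beta>)"
      using False assms by (intro mult_right_mono) auto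
    finally have "(u - Z) / \<eta> \<le> - \<beta>"
      using assms by (simp add: divide_simps mult.commute)
    then have "logistic_weight z * \<beta> \<le> - (logistic_weight z * (u - Z) / \<eta>)"
      using weight_pos mult_left_mono[of "(u - Z) / \<eta>" "- \<beta>" "logistic_weight z"] by simp
    then show ?thesis
      using exp_gt_zero[of "- u"] unfolding if_P[OF True] by linarith
  next
    case False
    have "logistic_weight z * \<beta> \<le> 0"
      using \<open>\<not> 0 < \<beta>\<close> weight_pos by (simp add: mult_nonneg_nonpos)
    then show ?thesis
      using exp_gt_zero[of "- u"] unfolding if_not_P[OF False] by linarith
  qed
qed

lemma sum_logistic_weight_mult_nonpos:
  fixes z c \<beta> :: "nat \<Rightarrow> real"
  assumes \<eta>_pos: "0 < \<eta>" and n_le_\<eta>: "real n \<le> \<eta>"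
    and u_large: "ln (16 * \<eta>) < u" and tail: "32 * \<eta>\<^sup>2 * exp (- u) \<le> u - ln (16 * \<eta>)"
    and b: "0 \<le> b" "b \<le> \<eta>"
    and z: "\<forall>i<n. z i = c i + b * \<beta> i" and c: "\<forall>i<n. u \<le> c i" and \<beta>: "\<forall>i<n. \<bar>\<beta> i\<bar> \<le> 1"
    and risk: "real n / (8 * \<eta>) < (\<Sum>i<n. logistic_loss (z i))"
  shows "(\<Sum>i<n. logistic_weight (z i) * \<beta> i) \<le> 0"
proof -
  define Z where "Z = ln (16 * \<eta>)"
  define S where "S = {i. i < n \<and> z i \<le> Z}"
  have "(\<Sum>i<n. logistic_weight (z i) * \<beta> i)
      \<le> (\<Sum>i<n. exp (- u) - (if z i \<le> Z then logistic_weight (z i) * (u - Z) / \<eta> else 0))"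
    using assms unfolding Z_def
    by (intro sum_mono logistic_weight_mult_le[where c = "c _" and b = b and \<beta> = "\<beta> _"]) auto
  also have "\<dots> = real n * exp (- u) - (u - Z) / \<eta> * (\<Sum>i\<in>S. logistic_weight (z i))"
    unfolding S_def
    by (simp add: sum_subtractf sum.inter_filter[symmetric] sum_divide_distrib sum_distrib_left mult.commute)
  also have "\<dots> \<le> real n * exp (- u) - (u - Z) / \<eta> * (real n / (32 * \<eta>))"
    using logistic_weight_sum_low_margin_ge[OF \<eta>_pos n_le_\<eta> risk] u_large \<eta>_pos
    unfolding S_def Z_def by (intro diff_left_mono mult_left_mono) auto
  also have "\<dots> = real n / (32 * \<eta>\<^sup>2) * (32 * \<eta>\<^sup>2 * exp (- u) - (u - Z))"
    using \<eta>_pos by (simp add: field_simps power2_eq_square)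
  also have "\<dots> \<le> 0"
    using tail \<eta>_pos unfolding Z_def by (intro mult_nonneg_nonpos) auto
  finally show ?thesis .
qed

lemma logistic_risk_eq:
  "logistic_risk n x w = (\<Sum>i<n. logistic_loss (w \<bullet> x i)) / real n"
  unfolding logistic_risk_def logistic_loss_def by simp

lemma gd_iter_Suc_inner:
  "gd_iter n x \<eta> (Suc t) \<bullet> y = gd_iter n x \<eta> t \<bullet> y
     + \<eta> / real n * (\<Sum>i<n. logistic_weight (gd_iter n x \<eta> t \<bullet> x i) * (x i \<bullet> y))"
  by (simp add: logistic_grad_def logistic_weight_def
      inner_add_left inner_diff_left inner_minus_left inner_sum_left inner_scaleR_left)

lemma gd_iter_inner_mono:
  assumes "0 \<le> \<eta>" and "\<forall>i<n. 0 \<le> x i \<bullet> y"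
  shows "gd_iter n x \<eta> t \<bullet> y \<le> gd_iter n x \<eta> (Suc t) \<bullet> y"
proof -
  have "0 \<le> (\<Sum>i<n. logistic_weight (gd_iter n x \<eta> t \<bullet> x i) * (x i \<bullet> y))"
    using assms logistic_weight_pos by (intro sum_nonneg) (simp add: less_imp_le)
  then show ?thesis
    unfolding gd_iter_Suc_inner using assms by simp
qed

lemma gd_iter_inner_ge_half_margin:
  assumes n_pos: "1 \<le> n" and \<eta>_nonneg: "0 \<le> \<eta>" and \<gamma>_nonneg: "0 \<le> \<gamma>"
    and margin: "\<forall>i<n. \<gamma> \<le> x i \<bullet> y" and "1 \<le> t"
  shows "\<eta> * \<gamma> / 2 \<le> gd_iter n x \<eta> t \<bullet> y"
  using \<open>1 \<le> t\<close>
proof (induction t rule: dec_induct)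
  case base
  have "real n * (\<gamma> / 2) \<le> (\<Sum>i<n. logistic_weight 0 * (x i \<bullet> y))"
    using margin sum_mono[of "{..<n}" "\<lambda>_. \<gamma> / 2"] by (simp add: logistic_weight_def)
  then have "\<gamma> / 2 \<le> (\<Sum>i<n. logistic_weight 0 * (x i \<bullet> y)) / real n"
    using n_pos by (simp add: field_simps)
  then have "\<eta> * (\<gamma> / 2) \<le> \<eta> * ((\<Sum>i<n. logistic_weight 0 * (x i \<bullet> y)) / real n)"
    using \<eta>_nonneg by (rule mult_left_mono)
  then show ?case
    unfolding One_nat_def gd_iter_Suc_inner by simp
next
  case (step t)
  have "\<forall>i<n. 0 \<le> x i \<bullet> y"
    using margin \<gamma>_nonneg by force
  then show ?case
    using step.IH gd_iter_inner_mono[OF \<eta>_nonneg] by (meson order_trans)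
qed

lemma gd_iter_inner_step_bound:
  assumes "0 \<le> \<eta>" and "\<forall>i<n. \<bar>x i \<bullet> y\<bar> \<le> 1"
  shows "\<bar>gd_iter n x \<eta> (Suc t) \<bullet> y - gd_iter n x \<eta> t \<bullet> y\<bar> \<le> \<eta>"
proof -
  define D where "D = (\<Sum>i<n. logistic_weight (gd_iter n x \<eta> t \<bullet> x i) * (x i \<bullet> y)) / real n"
  have "\<bar>\<Sum>i<n. logistic_weight (gd_iter n x \<eta> t \<bullet> x i) * (x i \<bullet> y)\<bar> \<le> (\<Sum>i<n. 1)"
    using assms
    by (intro order_trans[OF sum_abs] sum_mono)
      (simp add: abs_mult abs_of_pos[OF logistic_weight_pos] mult_le_one logistic_weight_le_one)
  then have "\<bar>D\<bar> \<le> 1"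
    unfolding D_def by (cases n) (auto simp: divide_le_eq)
  moreover have "gd_iter n x \<eta> (Suc t) \<bullet> y - gd_iter n x \<eta> t \<bullet> y = \<eta> * D"
    unfolding gd_iter_Suc_inner D_def by simp
  ultimately show ?thesis
    using assms(1) by (simp add: abs_mult mult_left_le)
qed

lemma max_margin_pos:
  assumes n_pos: "1 \<le> n" and separable: "\<exists>w. \<forall>i<n. 0 < w \<bullet> x i"
  shows "0 < max_margin n x"
proof -
  obtain w where w: "\<forall>i<n. 0 < w \<bullet> x i"
    using separable by blast
  then have "w \<noteq> 0"
    using n_pos by fastforce
  define w1 where "w1 = w /\<^sub>R norm w"
  have "norm w1 = 1" and "\<forall>i<n. 0 < w1 \<bullet> x i"
    unfolding w1_def using w \<open>w \<noteq> 0\<close> by auto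
  then have "0 < (MIN i\<in>{..<n}. w1 \<bullet> x i)"
    using n_pos by (subst Min_gr_iff) (auto simp: lessThan_empty_iff)
  also have "\<dots> \<le> max_margin n x"
    unfolding max_margin_def
  proof (rule cSUP_upper)
    show "w1 \<in> {w. norm w = 1}"
      using \<open>norm w1 = 1\<close> by simp
    have "(MIN i\<in>{..<n}. v \<bullet> x i) \<le> norm (x 0)" if "norm v = 1" for v :: "real^2"
    proof -
      have "(MIN i\<in>{..<n}. v \<bullet> x i) \<le> v \<bullet> x 0"
        using n_pos by (intro Min_le) auto
      also have "\<dots> \<le> norm (x 0)"
        using norm_cauchy_schwarz[of v "x 0"] that by simp
      finally show ?thesis .
    qed
    then show "bdd_above ((\<lambda>v. MIN i\<in>{..<n}. v \<bullet> x i) ` {w. norm w = 1})"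
      by (intro bdd_aboveI2) auto
  qed
  finally show ?thesis .
qed

locale large_step_logistic_gd =
  fixes n :: nat and x :: "nat \<Rightarrow> real^2" and \<eta> \<gamma> :: real and w :: "real^2"
  assumes n_pos: "1 \<le> n"
    and data_bounded: "\<forall>i<n. norm (x i) \<le> 1"
    and w_unit: "norm w = 1"
    and margin_pos: "0 < \<gamma>"
    and margin: "\<forall>i<n. \<gamma> \<le> w \<bullet> x i"
    and \<eta>_ge_n: "real n \<le> \<eta>"
    and \<eta>_large: "32 / \<gamma>\<^sup>2 * ln (256 / \<gamma>\<^sup>2) \<le> \<eta>"
begin

abbreviation iterate :: "nat \<Rightarrow> real^2" where
  "iterate t \<equiv> gd_iter n x \<eta> t"

lemma \<eta>_pos: "0 < \<eta>"
  using n_pos \<eta>_ge_n by linarith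

lemma inner_data_le_one:
  assumes "norm v = 1" and "i < n"
  shows "\<bar>v \<bullet> x i\<bar> \<le> 1"
  using Cauchy_Schwarz_ineq2[of v "x i"] assms data_bounded by force

lemma margin_le_one: "\<gamma> \<le> 1"
  using margin inner_data_le_one[OF w_unit, of 0] n_pos by fastforce

lemma iterate_margin_part_ge:
  assumes "1 \<le> t" and "i < n"
  shows "\<eta> * \<gamma>\<^sup>2 / 2 \<le> (iterate t \<bullet> w) * (w \<bullet> x i)"
proof -
  have "\<eta> * \<gamma> / 2 \<le> iterate t \<bullet> w"
    using gd_iter_inner_ge_half_margin[OF n_pos _ _ _ \<open>1 \<le> t\<close>] \<eta>_pos margin_pos margin
    by (simp add: inner_commute)
  moreover have "0 \<le> \<eta> * \<gamma> / 2"
    using \<eta>_pos margin_pos by simp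
  ultimately have "(\<eta> * \<gamma> / 2) * \<gamma> \<le> (iterate t \<bullet> w) * (w \<bullet> x i)"
    using margin \<open>i < n\<close> margin_pos by (intro mult_mono) auto
  then show ?thesis
    by (simp add: power2_eq_square)
qed

lemma orthogonal_component_nonincreasing:
  assumes v_unit: "norm v = 1" and v_orth: "v \<bullet> w = 0" and "1 \<le> t"
    and b: "0 \<le> iterate t \<bullet> v" "iterate t \<bullet> v \<le> \<eta>"
    and risk: "1 / (8 * \<eta>) < logistic_risk n x (iterate t)"
  shows "iterate (Suc t) \<bullet> v \<le> iterate t \<bullet> v"
proof -
  define u where "u = \<eta> * \<gamma>\<^sup>2 / 2"
  note step_size = large_step_size_bounds[OF margin_pos margin_le_one \<eta>_large, folded u_def]
  have "0 < u"
    unfolding u_def using \<eta>_pos margin_pos by simp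
  then have u_large: "ln (16 * \<eta>) < u" and tail: "32 * \<eta>\<^sup>2 * exp (- u) \<le> u - ln (16 * \<eta>)"
    using step_size by linarith+
  have "u \<le> (iterate t \<bullet> w) * (w \<bullet> x i)" if "i < n" for i
    unfolding u_def using iterate_margin_part_ge[OF \<open>1 \<le> t\<close> that] .
  moreover have "iterate t \<bullet> x i = (iterate t \<bullet> w) * (w \<bullet> x i) + (iterate t \<bullet> v) * (v \<bullet> x i)" for i
    using w_unit v_unit v_orth by (intro inner_expand_orthonormal_pair) (simp_all add: inner_commute)
  moreover have "real n / (8 * \<eta>) < (\<Sum>i<n. logistic_loss (iterate t \<bullet> x i))"
    using risk n_pos \<eta>_pos by (simp add: logistic_risk_eq field_simps)
  ultimately have "(\<Sum>i<n. logistic_weight (iterate t \<bullet> x i) * (v \<bullet> x i)) \<le> 0"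
    using \<eta>_pos \<eta>_ge_n u_large tail b inner_data_le_one[OF v_unit]
    by (intro sum_logistic_weight_mult_nonpos[where c = "\<lambda>i. (iterate t \<bullet> w) * (w \<bullet> x i)"
          and b = "iterate t \<bullet> v" and \<beta> = "\<lambda>i. v \<bullet> x i"]) auto
  then have "\<eta> / real n * (\<Sum>i<n. logistic_weight (iterate t \<bullet> x i) * (v \<bullet> x i)) \<le> 0"
    using \<eta>_pos by (intro mult_nonneg_nonpos) auto
  moreover have "iterate (Suc t) \<bullet> v
      = iterate t \<bullet> v + \<eta> / real n * (\<Sum>i<n. logistic_weight (iterate t \<bullet> x i) * (v \<bullet> x i))"
    unfolding gd_iter_Suc_inner by (simp add: inner_commute)
  ultimately show ?thesis
    by linarith
qed

lemma orthogonal_component_bounded_step: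
  assumes v_unit: "norm v = 1" and v_orth: "v \<bullet> w = 0"
    and bounded: "\<bar>iterate t \<bullet> v\<bar> \<le> \<eta>"
    and risk: "1 / (8 * \<eta>) < logistic_risk n x (iterate t)"
  shows "\<bar>iterate (Suc t) \<bullet> v\<bar> \<le> \<eta>"
proof -
  have step: "\<bar>iterate (Suc t) \<bullet> v - iterate t \<bullet> v\<bar> \<le> \<eta>"
    using \<eta>_pos inner_data_le_one[OF v_unit]
    by (intro gd_iter_inner_step_bound) (simp_all add: inner_commute)
  consider "t = 0" | "1 \<le> t" "0 \<le> iterate t \<bullet> v" | "1 \<le> t" "iterate t \<bullet> v < 0"
    by linarith
  then show ?thesis
  proof cases
    case 1
    then show ?thesis
      using step by simp
  next
    case 2
    then have "iterate (Suc t) \<bullet> v \<le> iterate t \<bullet> v"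
      using bounded risk by (intro orthogonal_component_nonincreasing[OF v_unit v_orth]) auto
    then show ?thesis
      using 2 step bounded unfolding abs_le_iff by linarith
  next
    case 3
    then have "iterate (Suc t) \<bullet> (- v) \<le> iterate t \<bullet> (- v)"
      using v_unit v_orth bounded risk
      by (intro orthogonal_component_nonincreasing) auto
    then show ?thesis
      using 3 step bounded unfolding abs_le_iff inner_minus_right by linarith
  qed
qed

end

theorem lemma6:
  fixes n :: nat and x :: "nat \<Rightarrow> real^2" and \<eta> :: real
    and w_star v_star :: "real^2"
  assumes n_pos: "n \<ge> 1"
    and bounded: "\<forall>i<n. norm (x i) \<le> 1"
    and separable: "\<exists>w. \<forall>i<n. w \<bullet> x i > 0"
    and w_star_unit: "norm w_star = 1"
    and w_star_max: "(MIN i \<in> {..<n}. w_star \<bullet> x i) = max_margin n x"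
    and v_star_unit: "norm v_star = 1"
    and v_star_orth: "v_star \<bullet> w_star = 0"
    and eta_pos: "\<eta> > 0"
    and eta_large: "\<eta> \<ge> max (real n)
          (32 / (max_margin n x)\<^sup>2 * ln (256 / (max_margin n x)\<^sup>2))"
  shows "\<forall>t. (\<forall>s\<le>t. logistic_risk n x (gd_iter n x \<eta> s) > 1 / (8 * \<eta>))
             \<longrightarrow> \<bar>gd_iter n x \<eta> t \<bullet> v_star\<bar> \<le> \<eta>"
proof -
  have "0 < max_margin n x"
    using max_margin_pos n_pos separable by blast
  moreover have "\<forall>i<n. max_margin n x \<le> w_star \<bullet> x i"
    unfolding w_star_max[symmetric] by simp
  ultimately interpret large_step_logistic_gd n x \<eta> "max_margin n x" w_star
    using n_pos bounded w_star_unit eta_large by unfold_locales auto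
  show ?thesis
  proof (intro allI impI)
    fix t
    assume "\<forall>s\<le>t. 1 / (8 * \<eta>) < logistic_risk n x (iterate s)"
    then show "\<bar>iterate t \<bullet> v_star\<bar> \<le> \<eta>"
    proof (induction t)
      case 0
      then show ?case
        using eta_pos by simp
    next
      case (Suc t)
      then show ?case
        using orthogonal_component_bounded_step[OF v_star_unit v_star_orth] by simp
    qed
  qed
qed

end
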